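(* Let $n\ge 2$. For $\vec{x}=(x_1,\dots,x_n)\in\{0,1\}^n$ and $\vec{a}=(a_1,\dots,a_n)\in\{0,1\}^n$, define the $n$-partite Popescu–Rohrlich box $P^{PR}_n(\vec a\mid\vec x)=2^{-(n-1)}$ if $\bigoplus_i a_i=\prod_i x_i$ and $0$ otherwise, the even-parity box $P^c_n(\vec a\mid \vec x)=2^{-(n-1)}$ if $\bigoplus_i a_i=0$ and $0$ otherwise, and for $0\le\varepsilon\le 1$ the correlated non-local box $P^{PR}_{n,\varepsilon}=\varepsilon P^{PR}_n+(1-\varepsilon)P^c_n$. Consider the following generalized Brunner–Skrzypczyk (BS) protocol acting on two independent copies of an $n$-partite box shared by $n$ parties: party $i$ inputs $x_i$ into the first box and receives $a_i$; party $i$ then inputs $y_i=x_i\cdot(1\oplus a_i)$ into the second box and receives $b_i$; party $i$ outputs $c_i=a_i\oplus b_i$. The resulting map $\vec x\mapsto\vec c$ defines a new $n$-partite box. Then: (1) for every $0<\varepsilon<1$, applying the generalized BS protocol to two copies of $P^{PR}_{n,\varepsilon}$ yields a box $P^{PR}_{n,\varepsilon'}$ with $\varepsilon'>\varepsilon$; (2) for every $\varepsilon>0$, iterating the protocol (applying it to $2^m$ copies of $P^{PR}_{n,\varepsilon}$ recursively, pairing up the boxes obtained at each level) yields boxes $P^{PR}_{n,\varepsilon_m}$ with $\varepsilon_m\to 1$ as $m\to\infty$, i.e. $P^{PR}_{n,\varepsilon}$ is distilled arbitrarily closely to $P^{PR}_n$.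
   Context: An $n$-partite box is a conditional probability distribution $P(\vec a\mid \vec x)$ with $n$ binary inputs and $n$ binary outputs, party $i$ holding input $x_i$ and output $a_i$; boxes used in a protocol are independent copies, and inputs to the second box may depend on the outputs of the first box at the same party (local wiring). *)

theory Defs
  imports Complex_Main
begin

text \<open>Bit strings in {0,1}^n are represented as bool lists of length n
  (True = 1). An n-partite box is a function P a x giving P(a|x),
  where a is the output vector and x the input vector.\<close>

type_synonym box = "bool list \<Rightarrow> bool list \<Rightarrow> real"

definition xor_all :: "bool list \<Rightarrow> bool" where
  "xor_all a = foldr (\<lambda>u v. u \<noteq> v) a False"

definition and_all :: "bool list \<Rightarrow> bool" where
  "and_all x = list_all id x"

definition PR_box :: "nat \<Rightarrow> box" where
  "PR_box n a x = (if xor_all a = and_all x then 1 / 2 ^ (n - 1) else 0)"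

definition even_box :: "nat \<Rightarrow> box" where
  "even_box n a x = (if xor_all a = False then 1 / 2 ^ (n - 1) else 0)"

definition PR_eps_box :: "nat \<Rightarrow> real \<Rightarrow> box" where
  "PR_eps_box n \<epsilon> a x = \<epsilon> * PR_box n a x + (1 - \<epsilon>) * even_box n a x"

text \<open>Generalized BS protocol on two independent boxes P (first) and Q (second):
  party i inputs x_i into P, gets a_i, inputs y_i = x_i(1 xor a_i) into Q,
  gets b_i and outputs c_i = a_i xor b_i.\<close>

definition BS_protocol :: "nat \<Rightarrow> box \<Rightarrow> box \<Rightarrow> box" where
  "BS_protocol n P Q c x =
     (\<Sum>a\<in>{a :: bool list. length a = n}.
        P a x * Q (map2 (\<lambda>ai ci. ai \<noteq> ci) a c) (map2 (\<lambda>xi ai. xi \<and> \<not> ai) x a))"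

definition box_eq :: "nat \<Rightarrow> box \<Rightarrow> box \<Rightarrow> bool" where
  "box_eq n P Q \<longleftrightarrow> (\<forall>a x. length a = n \<longrightarrow> length x = n \<longrightarrow> P a x = Q a x)"

definition BS_iter :: "nat \<Rightarrow> nat \<Rightarrow> box \<Rightarrow> box" where
  "BS_iter n m P = ((\<lambda>Q. BS_protocol n Q Q) ^^ m) P"

end

theory Submission imports Defs begin

text \<open>Party i feeds y_i = x_i \<and> \<not> a_i into the second box, so the conjunction of the inputs
  of the second box equals that of the first box exactly when a = 0, and is 0 otherwise.
  Summing over a, the product of two noisy PR boxes is again a noisy PR box, whose PR weight
  grows from \<epsilon> to \<epsilon> + \<epsilon>(1-\<epsilon>)/2^(n-1); the extra weight comes from the single term a = 0.
  Hence 1 - \<epsilon>' = (1-\<epsilon>)(1 - \<epsilon>/2^(n-1)), and iterating the protocol drives the distance to the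
  PR box to zero geometrically.\<close>

lemma xor_all_Nil [simp]: "xor_all [] = False"
  by (simp add: xor_all_def)

lemma xor_all_Cons [simp]: "xor_all (b # bs) = (b \<noteq> xor_all bs)"
  by (simp add: xor_all_def)

lemma and_all_Nil [simp]: "and_all [] = True"
  by (simp add: and_all_def)

lemma and_all_Cons [simp]: "and_all (b # bs) = (b \<and> and_all bs)"
  by (simp add: and_all_def)

lemma xor_all_replicate_False [simp]: "xor_all (replicate n False) = False"
  by (induction n) auto

lemma xor_all_map2_xor:
  "length a = length c \<Longrightarrow> xor_all (map2 (\<lambda>ai ci. ai \<noteq> ci) a c) = (xor_all a \<noteq> xor_all c)"
proof (induction a arbitrary: c)
  case (Cons h t)
  then show ?case by (cases c) auto
qed simp

lemma and_all_map2_and_not: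
  "length x = length a \<Longrightarrow>
     and_all (map2 (\<lambda>xi ai. xi \<and> \<not> ai) x a) = (and_all x \<and> a = replicate (length a) False)"
proof (induction x arbitrary: a)
  case (Cons h t)
  then show ?case by (cases a) auto
qed simp

lemma bit_strings_eq_lists: "{a :: bool list. length a = n} = {a. set a \<subseteq> UNIV \<and> length a = n}"
  by auto

lemma finite_bit_strings: "finite {a :: bool list. length a = n}"
  unfolding bit_strings_eq_lists by (rule finite_lists_length_eq) simp

lemma card_bit_strings: "card {a :: bool list. length a = n} = 2 ^ n"
  using card_lists_length_eq[of "UNIV :: bool set" n] unfolding bit_strings_eq_lists
  by (simp add: card_UNIV_bool)

lemma card_bit_strings_xor_all:
  assumes "n \<ge> 1"
  shows "card {a. length a = n \<and> xor_all a = b} = 2 ^ (n - 1)"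
proof -
  obtain k where n: "n = Suc k"
    using assms by (cases n) auto
  let ?prepend_parity = "\<lambda>a. (b \<noteq> xor_all a) # a"
  have "{a. length a = Suc k \<and> xor_all a = b} = ?prepend_parity ` {a. length a = k}"
  proof (intro set_eqI iffI)
    fix a assume "a \<in> {a. length a = Suc k \<and> xor_all a = b}"
    then obtain h t where "a = h # t" "length t = k" "(h \<noteq> xor_all t) = b"
      by (auto simp: length_Suc_conv)
    then show "a \<in> ?prepend_parity ` {a. length a = k}"
      by auto
  qed auto
  moreover have "inj_on ?prepend_parity {a. length a = k}"
    by (auto simp: inj_on_def)
  ultimately show ?thesis
    using n by (simp add: card_image card_bit_strings)
qed

lemma sum_bit_strings_by_parity:
  fixes g :: "bool list \<Rightarrow> real"
  assumes n: "n \<ge> 1"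
    and odd: "\<And>a. length a = n \<Longrightarrow> xor_all a \<Longrightarrow> g a = g1"
    and even: "\<And>a. length a = n \<Longrightarrow> \<not> xor_all a \<Longrightarrow> a \<noteq> replicate n False \<Longrightarrow> g a = g0"
  shows "(\<Sum>a\<in>{a. length a = n}. g a) = 2^(n-1) * g1 + (2^(n-1) - 1) * g0 + g (replicate n False)"
proof -
  let ?z = "replicate n False"
  let ?odd = "{a. length a = n \<and> xor_all a = True}"
  let ?even = "{a. length a = n \<and> xor_all a = False}"
  have fin: "finite ?odd" "finite ?even"
    using finite_bit_strings[of n] by (auto intro: finite_subset)
  have split: "{a. length a = n} = ?odd \<union> ?even"
    by auto
  have "(\<Sum>a\<in>{a. length a = n}. g a) = (\<Sum>a\<in>?odd. g a) + (\<Sum>a\<in>?even. g a)"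
    unfolding split using fin by (rule sum.union_disjoint) auto
  also have "(\<Sum>a\<in>?odd. g a) = (\<Sum>a\<in>?odd. g1)"
    by (rule sum.cong) (auto simp: odd)
  also have "\<dots> = 2^(n-1) * g1"
    using card_bit_strings_xor_all[OF n, of True] by simp
  also have "(\<Sum>a\<in>?even. g a) = g ?z + (\<Sum>a\<in>?even - {?z}. g a)"
    using fin by (intro sum.remove) auto
  also have "(\<Sum>a\<in>?even - {?z}. g a) = (\<Sum>a\<in>?even - {?z}. g0)"
    by (rule sum.cong) (auto simp: even)
  also have "\<dots> = (2^(n-1) - 1) * g0"
    using card_bit_strings_xor_all[OF n, of False] by (simp add: card_Diff_singleton of_nat_diff)
  finally show ?thesis
    by simp
qed

definition distill :: "real \<Rightarrow> real \<Rightarrow> real" where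
  "distill c e = e + c * e * (1 - e)"

lemma one_minus_distill: "1 - distill c e = (1 - e) * (1 - c * e)"
  by (simp add: distill_def algebra_simps)

lemma distill_bounds:
  assumes "0 \<le> c" "c \<le> 1" "0 \<le> e" "e \<le> 1"
  shows "e \<le> distill c e" "distill c e \<le> 1"
proof -
  show "e \<le> distill c e"
    using assms by (simp add: distill_def)
  have "0 \<le> (1 - e) * (1 - c * e)"
    using assms by (simp add: mult_le_one)
  then show "distill c e \<le> 1"
    using one_minus_distill[of c e] by linarith
qed

lemma distill_gt:
  assumes "0 < c" "0 < e" "e < 1"
  shows "e < distill c e"
  using assms by (simp add: distill_def)

lemma funpow_distill_bounds:
  assumes "0 \<le> c" "c \<le> 1" "0 \<le> e" "e \<le> 1"
  shows "e \<le> (distill c ^^ m) e \<and> (distill c ^^ m) e \<le> 1"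
proof (induction m)
  case (Suc m)
  then show ?case
    using distill_bounds[OF assms(1,2), of "(distill c ^^ m) e"] assms by auto
qed (use assms in simp)

lemma funpow_distill_tendsto_1:
  assumes c: "0 < c" "c \<le> 1" and e: "0 < e" "e \<le> 1"
  shows "(\<lambda>m. (distill c ^^ m) e) \<longlonglongrightarrow> 1"
proof -
  let ?x = "\<lambda>m. (distill c ^^ m) e"
  have ce: "0 \<le> 1 - c * e"
    using c e by (simp add: mult_le_one)
  have gap: "1 - ?x m \<le> (1 - c * e) ^ m" for m
  proof (induction m)
    case 0
    show ?case
      using e by simp
  next
    case (Suc m)
    have bounds: "e \<le> ?x m" "?x m \<le> 1"
      using funpow_distill_bounds[of c e m] c e by auto
    have "1 - ?x (Suc m) = (1 - ?x m) * (1 - c * ?x m)"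
      by (simp add: one_minus_distill)
    also have "\<dots> \<le> (1 - ?x m) * (1 - c * e)"
      using bounds c by (intro mult_left_mono) simp_all
    also have "\<dots> \<le> (1 - c * e) ^ m * (1 - c * e)"
      using Suc ce by (rule mult_right_mono)
    finally show ?case
      by (simp add: mult.commute)
  qed
  have "(\<lambda>m. (1 - c * e) ^ m) \<longlonglongrightarrow> 0"
    using c e ce by (intro LIMSEQ_power_zero) simp
  then have lower: "(\<lambda>m. 1 - (1 - c * e) ^ m) \<longlonglongrightarrow> 1"
    using tendsto_diff[OF tendsto_const[of 1]] by fastforce
  show ?thesis
  proof (rule tendsto_sandwich[OF _ _ lower tendsto_const])
    show "\<forall>\<^sub>F m in sequentially. 1 - (1 - c * e) ^ m \<le> ?x m"
      using gap by (simp add: algebra_simps)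
    show "\<forall>\<^sub>F m in sequentially. ?x m \<le> 1"
      using funpow_distill_bounds[of c e] c e by simp
  qed
qed

lemma one_round_weight_identity:
  fixes N e :: real and A C :: bool
  assumes "N \<ge> 1"
  defines "summand \<equiv> \<lambda>s zero.
     (e * (if s = A then 1/N else 0) + (1-e) * (if \<not> s then 1/N else 0)) *
     (e * (if (s \<noteq> C) = (A \<and> zero) then 1/N else 0) + (1-e) * (if s = C then 1/N else 0))"
  shows "N * summand True False + (N - 1) * summand False False + summand False True
    = distill (1/N) e * (if C = A then 1/N else 0) + (1 - distill (1/N) e) * (if C = False then 1/N else 0)"
  using assms(1) unfolding summand_def distill_def
  by (cases A; cases C) (simp_all add: field_simps power2_eq_square)

lemma BS_protocol_PR_eps_box:
  assumes n: "n \<ge> 1" and lc: "length c = n" and lx: "length x = n"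
  shows "BS_protocol n (PR_eps_box n e) (PR_eps_box n e) c x = PR_eps_box n (distill (1 / 2^(n-1)) e) c x"
proof -
  define N :: real where "N = 2^(n-1)"
  have N: "N \<ge> 1"
    unfolding N_def by simp
  define A where "A = and_all x"
  define C where "C = xor_all c"
  define summand where "summand = (\<lambda>s zero.
     (e * (if s = A then 1/N else 0) + (1-e) * (if \<not> s then 1/N else 0)) *
     (e * (if (s \<noteq> C) = (A \<and> zero) then 1/N else 0) + (1-e) * (if s = C then 1/N else 0)))"
  have term_eq: "PR_eps_box n e a x * PR_eps_box n e (map2 (\<lambda>ai ci. ai \<noteq> ci) a c) (map2 (\<lambda>xi ai. xi \<and> \<not> ai) x a)
      = summand (xor_all a) (a = replicate n False)" if "length a = n" for a
  proof -
    have lengths: "length a = length c" "length x = length a"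
      using that lc lx by simp_all
    show ?thesis
      unfolding PR_eps_box_def PR_box_def even_box_def
        xor_all_map2_xor[OF lengths(1)] and_all_map2_and_not[OF lengths(2)]
      using that by (simp add: summand_def N_def A_def C_def)
  qed
  have "BS_protocol n (PR_eps_box n e) (PR_eps_box n e) c x
      = (\<Sum>a\<in>{a. length a = n}. summand (xor_all a) (a = replicate n False))"
    unfolding BS_protocol_def using term_eq by (intro sum.cong) auto
  also have "\<dots> = N * summand True False + (N - 1) * summand False False + summand False True"
  proof -
    have "xor_all a \<Longrightarrow> a \<noteq> replicate m False" for a m
      by auto
    then show ?thesis
      unfolding N_def by (subst sum_bit_strings_by_parity[OF n]) auto
  qed
  also have "\<dots> = distill (1/N) e * (if C = A then 1/N else 0) + (1 - distill (1/N) e) * (if C = False then 1/N else 0)"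
    unfolding summand_def by (rule one_round_weight_identity[OF N])
  also have "\<dots> = PR_eps_box n (distill (1 / 2^(n-1)) e) c x"
    unfolding PR_eps_box_def PR_box_def even_box_def N_def A_def C_def ..
  finally show ?thesis .
qed

lemma BS_protocol_box_eq_cong:
  "box_eq n P P' \<Longrightarrow> box_eq n (BS_protocol n P P) (BS_protocol n P' P')"
  unfolding box_eq_def BS_protocol_def by (intro allI impI sum.cong refl) simp_all

lemma box_eq_trans: "box_eq n P Q \<Longrightarrow> box_eq n Q R \<Longrightarrow> box_eq n P R"
  unfolding box_eq_def by auto

lemma BS_iter_PR_eps_box:
  assumes "n \<ge> 1"
  shows "box_eq n (BS_iter n m (PR_eps_box n e)) (PR_eps_box n ((distill (1 / 2^(n-1)) ^^ m) e))"
proof (induction m)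
  case 0
  then show ?case
    by (simp add: BS_iter_def box_eq_def)
next
  case (Suc m)
  let ?e = "(distill (1 / 2^(n-1)) ^^ m) e"
  have "box_eq n (BS_protocol n (PR_eps_box n ?e) (PR_eps_box n ?e))
                 (PR_eps_box n (distill (1 / 2^(n-1)) ?e))"
    unfolding box_eq_def using BS_protocol_PR_eps_box[OF assms] by blast
  with BS_protocol_box_eq_cong[OF Suc] show ?case
    unfolding BS_iter_def by (auto intro: box_eq_trans)
qed

theorem theorem1:
  fixes n :: nat
  assumes "n \<ge> 2"
  shows "(\<forall>\<epsilon>::real. 0 < \<epsilon> \<and> \<epsilon> < 1 \<longrightarrow>
            (\<exists>\<epsilon>'. \<epsilon> < \<epsilon>' \<and> \<epsilon>' \<le> 1 \<and>
               box_eq n (BS_protocol n (PR_eps_box n \<epsilon>) (PR_eps_box n \<epsilon>)) (PR_eps_box n \<epsilon>')))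
       \<and> (\<forall>\<epsilon>::real. 0 < \<epsilon> \<and> \<epsilon> \<le> 1 \<longrightarrow>
            (\<exists>\<epsilon>s :: nat \<Rightarrow> real.
               (\<forall>m. 0 \<le> \<epsilon>s m \<and> \<epsilon>s m \<le> 1 \<and>
                    box_eq n (BS_iter n m (PR_eps_box n \<epsilon>)) (PR_eps_box n (\<epsilon>s m)))
               \<and> \<epsilon>s \<longlonglongrightarrow> 1))"
proof -
  have n: "n \<ge> 1"
    using assms by simp
  define c :: real where "c = 1 / 2^(n-1)"
  have c: "0 < c" "c \<le> 1"
    unfolding c_def by simp_all
  have one_round: "box_eq n (BS_protocol n (PR_eps_box n e) (PR_eps_box n e)) (PR_eps_box n (distill c e))" for e
    unfolding box_eq_def c_def using BS_protocol_PR_eps_box[OF n] by blast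
  have iterated: "box_eq n (BS_iter n m (PR_eps_box n e)) (PR_eps_box n ((distill c ^^ m) e))" for m e
    unfolding c_def by (rule BS_iter_PR_eps_box[OF n])
  show ?thesis
  proof (intro conjI allI impI)
    fix \<epsilon> :: real assume "0 < \<epsilon> \<and> \<epsilon> < 1"
    then show "\<exists>\<epsilon>'. \<epsilon> < \<epsilon>' \<and> \<epsilon>' \<le> 1 \<and> box_eq n (BS_protocol n (PR_eps_box n \<epsilon>) (PR_eps_box n \<epsilon>)) (PR_eps_box n \<epsilon>')"
      using one_round distill_gt[OF c(1)] distill_bounds[OF less_imp_le c(2)] c by (meson less_imp_le)
  next
    fix \<epsilon> :: real assume "0 < \<epsilon> \<and> \<epsilon> \<le> 1"
    then show "\<exists>\<epsilon>s. (\<forall>m. 0 \<le> \<epsilon>s m \<and> \<epsilon>s m \<le> 1 \<and> box_eq n (BS_iter n m (PR_eps_box n \<epsilon>)) (PR_eps_box n (\<epsilon>s m)))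
                 \<and> \<epsilon>s \<longlonglongrightarrow> 1"
      using iterated funpow_distill_bounds[OF less_imp_le c(2)] funpow_distill_tendsto_1[OF c] c
      by (intro exI[of _ "\<lambda>m. (distill c ^^ m) \<epsilon>"]) (meson less_imp_le order_trans)
  qed
qed

end
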